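(* For every $J$-unitary $T$ on ${\cal K}$, $$V(T)^{-1}=V(T)^*=V(T^{-1})=J\,V(T^* )\,J.$$
   Context: ${\cal H}$ is a separable complex Hilbert space, ${\cal K}={\cal H}\oplus{\cal H}$, $J=\begin{pmatrix}{\bf 1}&0\\0&-{\bf 1}\end{pmatrix}$. A bounded invertible $T$ on ${\cal K}$ is $J$-unitary if $T^*JT=J$; then $T^*$ and $T^{-1}$ are $J$-unitary, and writing $T=\begin{pmatrix}a&b\\c&d\end{pmatrix}$ the blocks $a,d$ are invertible. Define the unitary $V(T)=\begin{pmatrix}(a^* )^{-1}&bd^{-1}\\-d^{-1}c&d^{-1}\end{pmatrix}$. *)

theory Defs
  imports "HOL-Analysis.Analysis"
begin

text \<open>Convention: the inner product is linear in the second argument.\<close>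

class chilbert_space = banach +
  fixes scaleC :: "complex \<Rightarrow> 'a \<Rightarrow> 'a"
  fixes cinner :: "'a \<Rightarrow> 'a \<Rightarrow> complex"
  assumes scaleC_add_right: "scaleC a (x + y) = scaleC a x + scaleC a y"
    and scaleC_add_left: "scaleC (a + b) x = scaleC a x + scaleC b x"
    and scaleC_scaleC: "scaleC a (scaleC b x) = scaleC (a * b) x"
    and scaleC_one: "scaleC 1 x = x"
    and scaleR_scaleC: "scaleR r x = scaleC (complex_of_real r) x"
    and cinner_commute: "cinner x y = cnj (cinner y x)"
    and cinner_add_right: "cinner x (y + z) = cinner x y + cinner x z"
    and cinner_scaleC_right: "cinner x (scaleC a y) = a * cinner x y"
    and cinner_self_norm: "cinner x x = complex_of_real ((norm x)\<^sup>2)"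

text \<open>The Hilbert direct sum \<open>H \<oplus> H\<close>, realised on the product type (its norm is
  already the Euclidean combination of the component norms).\<close>

instantiation prod :: (chilbert_space, chilbert_space) chilbert_space
begin

definition scaleC_prod_def: "scaleC c (p :: 'a \<times> 'b) = (scaleC c (fst p), scaleC c (snd p))"
definition cinner_prod_def: "cinner (p :: 'a \<times> 'b) q = cinner (fst p) (fst q) + cinner (snd p) (snd q)"

instance
proof
  fix a b :: complex and x y z :: "'a \<times> 'b" and r :: real
  show "scaleC a (x + y) = scaleC a x + scaleC a y"
    by (simp add: scaleC_prod_def scaleC_add_right)
  show "scaleC (a + b) x = scaleC a x + scaleC b x"
    by (simp add: scaleC_prod_def scaleC_add_left)
  show "scaleC a (scaleC b x) = scaleC (a * b) x"
    by (simp add: scaleC_prod_def scaleC_scaleC)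
  show "scaleC 1 x = x"
    by (simp add: scaleC_prod_def scaleC_one)
  show "scaleR r x = scaleC (complex_of_real r) x"
    by (simp add: scaleC_prod_def scaleR_scaleC scaleR_prod_def)
  show "cinner x y = cnj (cinner y x)"
    by (simp add: cinner_prod_def cinner_commute[of "fst x"] cinner_commute[of "snd x"])
  show "cinner x (y + z) = cinner x y + cinner x z"
    by (simp add: cinner_prod_def cinner_add_right)
  show "cinner x (scaleC a y) = a * cinner x y"
    by (simp add: cinner_prod_def scaleC_prod_def cinner_scaleC_right algebra_simps)
  show "cinner x x = complex_of_real ((norm x)\<^sup>2)"
    by (simp add: cinner_prod_def cinner_self_norm norm_prod_def)
qed

end

definition clinear :: "('a::chilbert_space \<Rightarrow> 'b::chilbert_space) \<Rightarrow> bool" where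
  "clinear f \<longleftrightarrow> (\<forall>x y. f (x + y) = f x + f y) \<and> (\<forall>c x. f (scaleC c x) = scaleC c (f x))"

definition bounded_clinear :: "('a::chilbert_space \<Rightarrow> 'b::chilbert_space) \<Rightarrow> bool" where
  "bounded_clinear f \<longleftrightarrow> clinear f \<and> (\<exists>K. \<forall>x. norm (f x) \<le> norm x * K)"

text \<open>Adjoint of an operator (exists and is unique for bounded operators on a Hilbert space).\<close>
definition adj :: "('a::chilbert_space \<Rightarrow> 'a) \<Rightarrow> ('a \<Rightarrow> 'a)" where
  "adj T = (SOME S. \<forall>x y. cinner (T x) y = cinner x (S y))"

definition bounded_invertible :: "('a::chilbert_space \<Rightarrow> 'a) \<Rightarrow> bool" where
  "bounded_invertible T \<longleftrightarrow> bounded_clinear T \<and> bij T \<and> bounded_clinear (inv T)"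

definition Jop :: "('a::chilbert_space \<times> 'a) \<Rightarrow> ('a \<times> 'a)" where
  "Jop p = (fst p, - snd p)"

definition J_unitary :: "(('a::chilbert_space \<times> 'a) \<Rightarrow> ('a \<times> 'a)) \<Rightarrow> bool" where
  "J_unitary T \<longleftrightarrow> bounded_invertible T \<and> adj T \<circ> Jop \<circ> T = Jop"

text \<open>Block entries of \<open>T = [[a, b], [c, d]]\<close>.\<close>
definition blk_a :: "(('a::chilbert_space \<times> 'a) \<Rightarrow> ('a \<times> 'a)) \<Rightarrow> 'a \<Rightarrow> 'a" where
  "blk_a T x = fst (T (x, 0))"
definition blk_b :: "(('a::chilbert_space \<times> 'a) \<Rightarrow> ('a \<times> 'a)) \<Rightarrow> 'a \<Rightarrow> 'a" where
  "blk_b T y = fst (T (0, y))"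
definition blk_c :: "(('a::chilbert_space \<times> 'a) \<Rightarrow> ('a \<times> 'a)) \<Rightarrow> 'a \<Rightarrow> 'a" where
  "blk_c T x = snd (T (x, 0))"
definition blk_d :: "(('a::chilbert_space \<times> 'a) \<Rightarrow> ('a \<times> 'a)) \<Rightarrow> 'a \<Rightarrow> 'a" where
  "blk_d T y = snd (T (0, y))"

definition block_op :: "('a::chilbert_space \<Rightarrow> 'a) \<Rightarrow> ('a \<Rightarrow> 'a) \<Rightarrow> ('a \<Rightarrow> 'a) \<Rightarrow> ('a \<Rightarrow> 'a)
    \<Rightarrow> ('a \<times> 'a) \<Rightarrow> ('a \<times> 'a)" where
  "block_op a b c d p = (a (fst p) + b (snd p), c (fst p) + d (snd p))"

definition Vop :: "(('a::chilbert_space \<times> 'a) \<Rightarrow> ('a \<times> 'a)) \<Rightarrow> ('a \<times> 'a) \<Rightarrow> ('a \<times> 'a)" where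
  "Vop T = block_op (inv (adj (blk_a T))) (blk_b T \<circ> inv (blk_d T))
                    (\<lambda>x. - inv (blk_d T) (blk_c T x)) (inv (blk_d T))"

end

theory Submission
  imports Defs
begin

text \<open>Write \<open>T (x\<^sub>1, x\<^sub>2) = (y\<^sub>1, y\<^sub>2)\<close>. Then \<open>V(T)\<close> is the map \<open>(x\<^sub>1, y\<^sub>2) \<mapsto> (y\<^sub>1, x\<^sub>2)\<close> that
  exchanges the second components of a vector and its image. Exchanging the roles of \<open>x\<close> and \<open>y\<close>
  shows that \<open>V(T\<^sup>-\<^sup>1)\<close> inverts \<open>V(T)\<close>, and the \<open>J\<close>-isometry identity
  \<open>\<langle>y\<^sub>1, y\<^sub>1'\<rangle> - \<langle>y\<^sub>2, y\<^sub>2'\<rangle> = \<langle>x\<^sub>1, x\<^sub>1'\<rangle> - \<langle>x\<^sub>2, x\<^sub>2'\<rangle>\<close>, once rearranged, says that \<open>V(T)\<close> is an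
  isometry; so \<open>V(T)\<^sup>* = V(T)\<^sup>-\<^sup>1 = V(T\<^sup>-\<^sup>1)\<close>. The last identity follows from \<open>T\<^sup>* = J T\<^sup>-\<^sup>1 J\<close>
  and \<open>V(J S J) = J V(S) J\<close>. That \<open>V(T)\<close> is well defined needs the invertibility of the blocks
  \<open>d\<close> and \<open>a\<^sup>*\<close>, which rests on \<open>d\<^sup>* d = 1 + b\<^sup>* b\<close> and the projection theorem.\<close>

lemma scaleC_zero_right [simp]: "scaleC c 0 = 0"
  using scaleC_add_right [of c 0 0] by simp

lemma additive_cinner_right: "Modules.additive (cinner x)"
  by (simp add: Modules.additive_def cinner_add_right)

lemmas cinner_zero_right [simp] = additive.zero [OF additive_cinner_right]
lemmas cinner_minus_right = additive.minus [OF additive_cinner_right]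
lemmas cinner_diff_right = additive.diff [OF additive_cinner_right]

lemma cinner_add_left: "cinner (x + y) z = cinner x z + cinner y z"
  by (simp add: cinner_commute [of "x + y"] cinner_commute [of x] cinner_commute [of y]
      cinner_add_right)

lemma cinner_zero_left [simp]: "cinner 0 x = 0"
  by (simp add: cinner_commute [of 0 x])

lemma cinner_diff_left: "cinner (x - y) z = cinner x z - cinner y z"
  by (simp add: cinner_commute [of "x - y"] cinner_commute [of x] cinner_commute [of y]
      cinner_diff_right)

lemma cinner_scaleC_left: "cinner (scaleC a x) y = cnj a * cinner x y"
  by (simp add: cinner_commute [of "scaleC a x"] cinner_commute [of x] cinner_scaleC_right)

lemma cinner_self_eq_0_iff [simp]: "cinner x x = 0 \<longleftrightarrow> x = 0"
  by (simp add: cinner_self_norm)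

lemma cinner_ext:
  assumes "\<And>x. cinner x y = cinner x z"
  shows "y = z"
proof -
  have "cinner (y - z) (y - z) = 0"
    using assms by (simp add: cinner_diff_right)
  then show ?thesis
    by simp
qed

lemma Cauchy_Schwarz_cinner: "cmod (cinner x y) \<le> norm x * norm y"
proof (cases "y = 0")
  case True
  then show ?thesis by simp
next
  case False
  define t where "t = cinner y x / complex_of_real ((norm y)\<^sup>2)"
  define u where "u = x - scaleC t y"
  have ny: "norm y > 0"
    using False by simp
  have yu: "cinner y u = 0"
    using ny by (simp add: u_def cinner_diff_right cinner_scaleC_right t_def cinner_self_norm)
  then have uy: "cinner u y = 0"
    by (metis cinner_commute complex_cnj_zero)
  have "cinner x x = cinner (u + scaleC t y) (u + scaleC t y)"
    by (simp add: u_def)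
  also have "\<dots> = cinner u u + (t * cnj t) * cinner y y"
    by (simp add: cinner_add_left cinner_add_right cinner_scaleC_left cinner_scaleC_right yu uy
        mult_ac)
  also have "\<dots> = complex_of_real ((norm u)\<^sup>2 + (cmod t)\<^sup>2 * (norm y)\<^sup>2)"
    by (simp only: cinner_self_norm complex_norm_square [symmetric] of_real_add of_real_mult)
  finally have "(norm x)\<^sup>2 = (norm u)\<^sup>2 + (cmod t)\<^sup>2 * (norm y)\<^sup>2"
    by (simp only: cinner_self_norm of_real_eq_iff)
  then have "(cmod t)\<^sup>2 * (norm y)\<^sup>2 \<le> (norm x)\<^sup>2"
    by simp
  then have "(cmod t)\<^sup>2 * (norm y)\<^sup>2 * (norm y)\<^sup>2 \<le> (norm x)\<^sup>2 * (norm y)\<^sup>2"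
    by (rule mult_right_mono) simp
  then have "(cmod t * (norm y)\<^sup>2)\<^sup>2 \<le> (norm x * norm y)\<^sup>2"
    by (metis power_mult_distrib power2_eq_square mult.assoc)
  moreover have "cmod t * (norm y)\<^sup>2 = cmod (cinner y x)"
    using ny by (simp add: t_def norm_divide norm_power)
  ultimately have "(cmod (cinner y x))\<^sup>2 \<le> (norm x * norm y)\<^sup>2"
    by simp
  then have "cmod (cinner y x) \<le> norm x * norm y"
    by (rule power2_le_imp_le) simp
  then show ?thesis
    by (metis cinner_commute complex_mod_cnj)
qed

lemma parallelogram_law:
  fixes u v :: "'a::chilbert_space"
  shows "(norm (u - v))\<^sup>2 + (norm (u + v))\<^sup>2 = 2 * (norm u)\<^sup>2 + 2 * (norm v)\<^sup>2"
proof -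
  have "complex_of_real ((norm (u - v))\<^sup>2 + (norm (u + v))\<^sup>2)
      = cinner (u - v) (u - v) + cinner (u + v) (u + v)"
    by (simp only: of_real_add cinner_self_norm)
  also have "\<dots> = 2 * cinner u u + 2 * cinner v v"
    by (simp add: cinner_diff_left cinner_diff_right cinner_add_left cinner_add_right)
  also have "\<dots> = complex_of_real (2 * (norm u)\<^sup>2 + 2 * (norm v)\<^sup>2)"
    by (simp add: cinner_self_norm)
  finally show ?thesis
    by (simp only: of_real_eq_iff)
qed

section \<open>The projection theorem\<close>

definition csubspace :: "'a::chilbert_space set \<Rightarrow> bool" where
  "csubspace N \<longleftrightarrow> 0 \<in> N \<and> (\<forall>a\<in>N. \<forall>b\<in>N. a + b \<in> N) \<and> (\<forall>c. \<forall>a\<in>N. scaleC c a \<in> N)"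

lemma csubspace_0: "csubspace N \<Longrightarrow> 0 \<in> N"
  and csubspace_add: "csubspace N \<Longrightarrow> a \<in> N \<Longrightarrow> b \<in> N \<Longrightarrow> a + b \<in> N"
  and csubspace_scaleC: "csubspace N \<Longrightarrow> a \<in> N \<Longrightarrow> scaleC c a \<in> N"
  by (simp_all add: csubspace_def)

lemma Cauchy_minimizing_sequence:
  fixes x :: "'a::chilbert_space"
  assumes N: "csubspace N" and fN: "\<And>k. f k \<in> N" and "0 \<le> \<delta>"
    and lower: "\<And>n. n \<in> N \<Longrightarrow> \<delta> \<le> norm (x - n)"
    and f: "\<And>k. (norm (x - f k))\<^sup>2 < \<delta>\<^sup>2 + inverse (real (Suc k))"
  shows "Cauchy f"
proof -
  have close: "(norm (f k - f j))\<^sup>2 < 2 * inverse (real (Suc k)) + 2 * inverse (real (Suc j))"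
    for k j
  proof -
    \<comment> \<open>parallelogram law for \<open>x - f j\<close> and \<open>x - f k\<close>, whose sum is twice the distance
      from \<open>x\<close> to the midpoint of \<open>f k\<close> and \<open>f j\<close>, a point of \<open>N\<close>\<close>
    have "scaleR (1/2) (f k + f j) \<in> N"
      unfolding scaleR_scaleC by (intro csubspace_scaleC csubspace_add N fN)
    moreover have "(x - f j) + (x - f k) = scaleR 2 (x - scaleR (1/2) (f k + f j))"
      by (simp add: algebra_simps scaleR_2)
    ultimately have "2 * \<delta> \<le> norm ((x - f j) + (x - f k))"
      using lower by simp
    then have "(2 * \<delta>)\<^sup>2 \<le> (norm ((x - f j) + (x - f k)))\<^sup>2"
      using \<open>0 \<le> \<delta>\<close> by (intro power_mono) simp_all
    moreover have "f k - f j = (x - f j) - (x - f k)"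
      by simp
    ultimately show ?thesis
      using parallelogram_law [of "x - f j" "x - f k"] f [of j] f [of k]
      by (simp add: power_mult_distrib)
  qed
  show "Cauchy f"
  proof (rule CauchyI)
    fix e :: real
    assume "0 < e"
    then obtain M :: nat where M: "inverse (real (Suc M)) < e\<^sup>2 / 4"
      by (metis reals_Archimedean zero_less_divide_iff zero_less_numeral zero_less_power)
    have "norm (f m - f n) < e" if "M \<le> m" "M \<le> n" for m n
    proof -
      have "inverse (real (Suc m)) \<le> inverse (real (Suc M))"
        "inverse (real (Suc n)) \<le> inverse (real (Suc M))"
        using that by (simp_all add: le_imp_inverse_le)
      then have "(norm (f m - f n))\<^sup>2 < e\<^sup>2"
        using close [of m n] M by linarith
      then show ?thesis
        using \<open>0 < e\<close> by (simp add: power_less_imp_less_base)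
    qed
    then show "\<exists>M. \<forall>m\<ge>M. \<forall>n\<ge>M. norm (f m - f n) < e"
      by blast
  qed
qed

lemma closed_csubspace_nearest_point:
  fixes x :: "'a::chilbert_space"
  assumes N: "csubspace N" and "closed N"
  shows "\<exists>m\<in>N. \<forall>n\<in>N. norm (x - m) \<le> norm (x - n)"
proof -
  define \<delta> where "\<delta> = (INF n\<in>N. norm (x - n))"
  have N_ne: "N \<noteq> {}"
    using csubspace_0 [OF N] by blast
  have bdd: "bdd_below ((\<lambda>n. norm (x - n)) ` N)"
    by (intro bdd_belowI2 [of _ 0]) simp
  have lower: "\<delta> \<le> norm (x - n)" if "n \<in> N" for n
    unfolding \<delta>_def using bdd that by (rule cINF_lower)
  have "0 \<le> \<delta>"
    unfolding \<delta>_def using N_ne by (intro cINF_greatest) simp_all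
  have "\<exists>n\<in>N. (norm (x - n))\<^sup>2 < \<delta>\<^sup>2 + inverse (real (Suc k))" for k
  proof -
    have "\<delta> < sqrt (\<delta>\<^sup>2 + inverse (real (Suc k)))"
      using \<open>0 \<le> \<delta>\<close> by (simp add: real_less_rsqrt)
    then obtain n where "n \<in> N" "norm (x - n) < sqrt (\<delta>\<^sup>2 + inverse (real (Suc k)))"
      using cINF_less_iff [OF N_ne bdd] unfolding \<delta>_def by blast
    then show ?thesis
      by (metis norm_ge_zero real_sqrt_less_iff real_sqrt_pow2_iff real_sqrt_power)
  qed
  then obtain f where fN: "\<And>k. f k \<in> N"
    and f: "\<And>k. (norm (x - f k))\<^sup>2 < \<delta>\<^sup>2 + inverse (real (Suc k))"
    by metis
  have "Cauchy f"
    using N fN \<open>0 \<le> \<delta>\<close> lower f by (rule Cauchy_minimizing_sequence)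
  then obtain m where "f \<longlonglongrightarrow> m"
    using Cauchy_convergent_iff convergent_def by blast
  then have "m \<in> N"
    using \<open>closed N\<close> fN closed_sequential_limits by blast
  have "(\<lambda>k. (norm (x - f k))\<^sup>2) \<longlonglongrightarrow> (norm (x - m))\<^sup>2"
    using \<open>f \<longlonglongrightarrow> m\<close> by (intro tendsto_intros)
  moreover have "(\<lambda>k. \<delta>\<^sup>2 + inverse (real (Suc k))) \<longlonglongrightarrow> \<delta>\<^sup>2 + 0"
    by (intro tendsto_intros LIMSEQ_inverse_real_of_nat)
  ultimately have "(norm (x - m))\<^sup>2 \<le> \<delta>\<^sup>2"
    using f by (simp add: LIMSEQ_le less_imp_le)
  then have "norm (x - m) \<le> \<delta>"
    using \<open>0 \<le> \<delta>\<close> by (rule power2_le_imp_le)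
  then show ?thesis
    using \<open>m \<in> N\<close> lower by force
qed

text \<open>The variational characterisation of the nearest point: moving from \<open>m\<close> towards \<open>m + t n\<close>
  with \<open>t = \<langle>n, x - m\<rangle> / \<parallel>n\<parallel>\<^sup>2\<close> would shorten \<open>x - m\<close> by \<open>|\<langle>n, x - m\<rangle>|\<^sup>2 / \<parallel>n\<parallel>\<^sup>2\<close>.\<close>

lemma nearest_point_orthogonal:
  fixes x :: "'a::chilbert_space"
  assumes N: "csubspace N" and "m \<in> N" and "n \<in> N"
    and nearest: "\<And>n. n \<in> N \<Longrightarrow> norm (x - m) \<le> norm (x - n)"
  shows "cinner n (x - m) = 0"
proof (cases "n = 0")
  case True
  then show ?thesis by simp
next
  case False
  define z where "z = x - m"
  define \<alpha> where "\<alpha> = cinner n z"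
  define s where "s = (norm n)\<^sup>2"
  define t where "t = \<alpha> / complex_of_real s"
  have "s > 0"
    using False by (simp add: s_def)
  have "cinner (z - scaleC t n) (z - scaleC t n)
      = cinner z z - t * cnj \<alpha> - cnj t * \<alpha> + cnj t * t * complex_of_real s"
    by (simp add: cinner_diff_left cinner_diff_right cinner_scaleC_left cinner_scaleC_right
        \<alpha>_def s_def cinner_commute [of z n] cinner_self_norm [of n] algebra_simps)
  also have "\<dots> = cinner z z - \<alpha> * cnj \<alpha> / complex_of_real s"
    using \<open>s > 0\<close> by (simp add: t_def field_simps)
  also have "\<dots> = complex_of_real ((norm z)\<^sup>2 - (cmod \<alpha>)\<^sup>2 / s)"
    by (simp only: cinner_self_norm of_real_diff of_real_divide complex_norm_square)
  finally have shorter: "(norm (z - scaleC t n))\<^sup>2 = (norm z)\<^sup>2 - (cmod \<alpha>)\<^sup>2 / s"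
    by (simp only: cinner_self_norm of_real_eq_iff)
  have "m + scaleC t n \<in> N"
    using N \<open>m \<in> N\<close> \<open>n \<in> N\<close> by (intro csubspace_add csubspace_scaleC)
  from nearest [OF this] have "norm z \<le> norm (z - scaleC t n)"
    by (simp add: z_def algebra_simps)
  then have "(norm z)\<^sup>2 \<le> (norm (z - scaleC t n))\<^sup>2"
    by (intro power_mono) simp_all
  with shorter \<open>s > 0\<close> have "(cmod \<alpha>)\<^sup>2 \<le> 0"
    by (simp add: divide_le_0_iff)
  then show ?thesis
    by (simp add: \<alpha>_def z_def)
qed

lemma proper_closed_csubspace_orthogonal:
  fixes N :: "'a::chilbert_space set"
  assumes N: "csubspace N" and "closed N" and "N \<noteq> UNIV"
  obtains z where "z \<noteq> 0" and "\<And>n. n \<in> N \<Longrightarrow> cinner n z = 0"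
proof -
  obtain x where "x \<notin> N"
    using \<open>N \<noteq> UNIV\<close> by blast
  obtain m where "m \<in> N" and "\<And>n. n \<in> N \<Longrightarrow> norm (x - m) \<le> norm (x - n)"
    using closed_csubspace_nearest_point [OF N \<open>closed N\<close>] by blast
  with N have "\<And>n. n \<in> N \<Longrightarrow> cinner n (x - m) = 0"
    by (blast intro: nearest_point_orthogonal)
  moreover have "x - m \<noteq> 0"
    using \<open>x \<notin> N\<close> \<open>m \<in> N\<close> by auto
  ultimately show ?thesis
    using that by blast
qed

lemma clinear_additive: "clinear f \<Longrightarrow> Modules.additive f"
  by (simp add: clinear_def Modules.additive_def)

lemma clinear_add: "clinear f \<Longrightarrow> f (x + y) = f x + f y"
  and clinear_scaleC: "clinear f \<Longrightarrow> f (scaleC c x) = scaleC c (f x)"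
  by (simp_all add: clinear_def)

lemma clinear_zero: "clinear f \<Longrightarrow> f 0 = 0"
  and clinear_minus: "clinear f \<Longrightarrow> f (- x) = - f x"
  and clinear_diff: "clinear f \<Longrightarrow> f (x - y) = f x - f y"
  by (simp_all add: clinear_additive additive.zero additive.minus additive.diff)

lemma clinear_imp_linear: "clinear f \<Longrightarrow> linear f"
  by (intro linearI) (simp_all add: clinear_add clinear_scaleC scaleR_scaleC)

lemma bounded_clinear_imp_bounded_linear: "bounded_clinear f \<Longrightarrow> bounded_linear f"
  unfolding bounded_clinear_def
  by (auto intro: bounded_linear_intro simp: clinear_add clinear_scaleC scaleR_scaleC)

lemma clinear_inv:
  assumes f: "clinear f" and "bij f"
  shows "clinear (inv f)"
proof -
  have f_inv: "f (inv f z) = z" for z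
    using \<open>bij f\<close> by (simp add: bij_is_surj surj_f_inv_f)
  show ?thesis
    unfolding clinear_def using \<open>bij f\<close>
    by (simp add: inv_f_eq bij_is_inj clinear_add [OF f] clinear_scaleC [OF f] f_inv)
qed

lemma closed_range_bounded_below:
  fixes f :: "'a::banach \<Rightarrow> 'b::real_normed_vector"
  assumes f: "bounded_linear f" and below: "\<And>x. norm x \<le> norm (f x)"
  shows "closed (range f)"
  unfolding closed_sequential_limits
proof (intro allI impI)
  fix y l
  assume "(\<forall>n. y n \<in> range f) \<and> y \<longlonglongrightarrow> l"
  then have "\<forall>n. \<exists>x. y n = f x" and "y \<longlonglongrightarrow> l"
    by auto
  then obtain x where y: "\<And>n. y n = f (x n)"
    by metis
  have "Cauchy x"
  proof (rule CauchyI)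
    fix e :: real
    assume "0 < e"
    then obtain M where M: "\<And>m n. M \<le> m \<Longrightarrow> M \<le> n \<Longrightarrow> norm (y m - y n) < e"
      using CauchyD [OF LIMSEQ_imp_Cauchy [OF \<open>y \<longlonglongrightarrow> l\<close>]] by blast
    have "norm (x m - x n) < e" if "M \<le> m" "M \<le> n" for m n
      using below [of "x m - x n"] M [OF that]
      by (simp add: y linear_diff bounded_linear.linear [OF f])
    then show "\<exists>M. \<forall>m\<ge>M. \<forall>n\<ge>M. norm (x m - x n) < e"
      by blast
  qed
  then obtain a where "x \<longlonglongrightarrow> a"
    using Cauchy_convergent_iff convergent_def by blast
  then have "y \<longlonglongrightarrow> f a"
    unfolding y by (rule bounded_linear.tendsto [OF f])
  with \<open>y \<longlonglongrightarrow> l\<close> have "l = f a"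
    by (rule LIMSEQ_unique)
  then show "l \<in> range f"
    by simp
qed

lemma csubspace_range:
  assumes f: "clinear f"
  shows "csubspace (range f)"
  unfolding csubspace_def
proof (intro conjI ballI allI)
  show "0 \<in> range f"
    by (rule range_eqI [of _ _ 0]) (simp add: clinear_zero [OF f])
next
  fix a b
  assume "a \<in> range f" "b \<in> range f"
  then obtain x y where "a = f x" "b = f y"
    by blast
  then show "a + b \<in> range f"
    by (intro range_eqI [of _ _ "x + y"]) (simp add: clinear_add [OF f])
next
  fix c a
  assume "a \<in> range f"
  then obtain x where "a = f x"
    by blast
  then show "scaleC c a \<in> range f"
    by (intro range_eqI [of _ _ "scaleC c x"]) (simp add: clinear_scaleC [OF f])
qed

lemma Riesz_representation:
  fixes f :: "'a::chilbert_space \<Rightarrow> complex"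
  assumes add: "\<And>x y. f (x + y) = f x + f y" and scale: "\<And>c x. f (scaleC c x) = c * f x"
    and bound: "\<And>x. cmod (f x) \<le> norm x * K"
  obtains w where "\<And>x. f x = cinner w x"
proof (cases "\<forall>x. f x = 0")
  case True
  then show ?thesis
    using that [of 0] by simp
next
  case False
  have "bounded_linear f"
    by (rule bounded_linear_intro [where K = K]) (simp_all add: add scale bound scaleR_scaleC
        scaleR_conv_of_real)
  then have diff: "f (a - b) = f a - f b" for a b
    by (simp add: linear_diff bounded_linear.linear)
  define N where "N = {x. f x = 0}"
  have N: "csubspace N"
    using diff [of 0 0] by (auto simp: csubspace_def N_def add scale)
  have "closed N"
    unfolding N_def using \<open>bounded_linear f\<close>
    by (intro closed_Collect_eq) (simp_all add: linear_continuous_on)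
  moreover have "N \<noteq> UNIV"
    using False by (auto simp: N_def)
  ultimately obtain z where "z \<noteq> 0" and perp: "\<And>n. n \<in> N \<Longrightarrow> cinner n z = 0"
    using proper_closed_csubspace_orthogonal [OF N] by blast
  define s where "s = (norm z)\<^sup>2"
  have "s \<noteq> 0"
    using \<open>z \<noteq> 0\<close> by (simp add: s_def)
  have "f x = cinner (scaleC (cnj (f z) / complex_of_real s) z) x" for x
  proof -
    have "scaleC (f z) x - scaleC (f x) z \<in> N"
      by (simp add: N_def diff scale mult.commute)
    from perp [OF this] have "cinner z (scaleC (f z) x - scaleC (f x) z) = 0"
      by (metis cinner_commute complex_cnj_zero)
    then have "f z * cinner z x = f x * complex_of_real s"
      by (simp add: cinner_diff_right cinner_scaleC_right cinner_self_norm s_def)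
    then show ?thesis
      using \<open>s \<noteq> 0\<close> by (simp add: cinner_scaleC_left field_simps)
  qed
  then show ?thesis
    using that by blast
qed

lemma adj_eqI:
  fixes A :: "'a::chilbert_space \<Rightarrow> 'a"
  assumes "\<And>x y. cinner (A x) y = cinner x (S y)"
  shows "adj A = S"
proof
  fix y
  have "\<forall>x y. cinner (A x) y = cinner x (adj A y)"
    unfolding adj_def by (rule someI [where x = S]) (use assms in blast)
  then show "adj A y = S y"
    using assms by (intro cinner_ext) simp
qed

lemma cinner_adj:
  fixes A :: "'a::chilbert_space \<Rightarrow> 'a"
  assumes "bounded_clinear A"
  shows "cinner (A x) y = cinner x (adj A y)"
proof -
  obtain K where lin: "clinear A" and bound: "\<And>x. norm (A x) \<le> norm x * K"
    using assms by (auto simp: bounded_clinear_def)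
  have "\<exists>w. \<forall>x. cinner y (A x) = cinner w x" for y
  proof -
    have "cmod (cinner y (A x)) \<le> norm x * (norm y * K)" for x
      using Cauchy_Schwarz_cinner [of y "A x"] mult_left_mono [OF bound [of x], of "norm y"]
      by (simp add: mult_ac)
    then obtain w where "\<And>x. cinner y (A x) = cinner w x"
      by (rule Riesz_representation [rotated 2])
        (simp_all add: clinear_add [OF lin] clinear_scaleC [OF lin] cinner_add_right
          cinner_scaleC_right)
    then show ?thesis
      by blast
  qed
  then obtain S where S: "\<And>y x. cinner y (A x) = cinner (S y) x"
    by metis
  have adjoint: "cinner (A x) y = cinner x (S y)" for x y
    using S [of y x] by (metis cinner_commute)
  then have "adj A = S"
    by (rule adj_eqI)
  with adjoint show ?thesis
    by simp
qed

section \<open>\<open>J\<close>-unitary operators and their blocks\<close>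

definition J_isometric :: "(('a::chilbert_space \<times> 'a) \<Rightarrow> ('a \<times> 'a)) \<Rightarrow> bool" where
  "J_isometric S \<longleftrightarrow> (\<forall>u v. cinner (S u) (Jop (S v)) = cinner u (Jop v))"

lemma J_isometricD: "J_isometric S \<Longrightarrow> cinner (S u) (Jop (S v)) = cinner u (Jop v)"
  unfolding J_isometric_def by blast

lemma cinner_Jop: "cinner p (Jop q) = cinner (fst p) (fst q) - cinner (snd p) (snd q)"
  by (simp add: cinner_prod_def Jop_def cinner_minus_right)

lemma Jop_Jop [simp]: "Jop (Jop p) = p"
  by (simp add: Jop_def)

lemma J_unitary_iff: "J_unitary T \<longleftrightarrow> bounded_invertible T \<and> J_isometric T"
proof (cases "bounded_invertible T")
  case True
  then have "bounded_clinear T"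
    by (simp add: bounded_invertible_def)
  have "adj T \<circ> Jop \<circ> T = Jop \<longleftrightarrow> (\<forall>v. adj T (Jop (T v)) = Jop v)"
    by (auto simp: fun_eq_iff)
  also have "\<dots> \<longleftrightarrow> J_isometric T"
    unfolding J_isometric_def cinner_adj [OF \<open>bounded_clinear T\<close>] by (auto intro: cinner_ext)
  finally show ?thesis
    by (simp add: J_unitary_def True)
qed (simp add: J_unitary_def)

lemma J_isometric_inv:
  assumes "bij S" and "J_isometric S"
  shows "J_isometric (inv S)"
  unfolding J_isometric_def
proof (intro allI)
  fix u v
  show "cinner (inv S u) (Jop (inv S v)) = cinner u (Jop v)"
    using J_isometricD [OF \<open>J_isometric S\<close>, of "inv S u" "inv S v"]
    by (simp add: surj_f_inv_f [OF bij_is_surj [OF \<open>bij S\<close>]])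
qed

lemma J_unitary_inv: "J_unitary T \<Longrightarrow> J_unitary (inv T)"
  by (simp add: J_unitary_iff bounded_invertible_def bij_imp_bij_inv inv_inv_eq J_isometric_inv)

lemma J_unitaryD:
  assumes "J_unitary S"
  shows "bounded_clinear S" "clinear S" "bij S" "J_isometric S"
  using assms by (simp_all add: J_unitary_iff bounded_invertible_def bounded_clinear_def)

lemma adj_J_unitary:
  assumes "J_unitary T"
  shows "adj T = Jop \<circ> inv T \<circ> Jop"
proof
  fix q
  have "adj T (Jop (T r)) = Jop r" for r
    using assms unfolding J_unitary_def by (metis comp_apply)
  from this [of "inv T (Jop q)"] show "adj T q = (Jop \<circ> inv T \<circ> Jop) q"
    by (simp add: surj_f_inv_f [OF bij_is_surj [OF J_unitaryD(3) [OF assms]]])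
qed

lemma clinear_blocks:
  assumes "clinear S"
  shows "S (x1, x2) = (blk_a S x1 + blk_b S x2, blk_c S x1 + blk_d S x2)"
  using clinear_add [OF assms, of "(x1, 0)" "(0, x2)"]
  by (simp add: blk_a_def blk_b_def blk_c_def blk_d_def prod_eq_iff)

lemma clinear_blk:
  assumes "clinear S"
  shows "clinear (blk_a S)" "clinear (blk_b S)" "clinear (blk_c S)" "clinear (blk_d S)"
  using clinear_add [OF assms, of "(_, 0)" "(_, 0)"] clinear_add [OF assms, of "(0, _)" "(0, _)"]
    clinear_scaleC [OF assms, of _ "(_, 0)"] clinear_scaleC [OF assms, of _ "(0, _)"]
  by (simp_all add: clinear_def blk_a_def blk_b_def blk_c_def blk_d_def scaleC_prod_def)

lemma bounded_clinear_blk_d: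
  assumes "bounded_clinear S"
  shows "bounded_clinear (blk_d S)"
proof -
  obtain K where K: "\<And>p. norm (S p) \<le> norm p * K"
    using assms by (auto simp: bounded_clinear_def)
  have "norm (blk_d S x) \<le> norm x * K" for x
    using norm_snd_le [of "snd (S (0, x))" "fst (S (0, x))"] K [of "(0, x)"]
    by (simp add: blk_d_def norm_Pair)
  with assms show ?thesis
    by (auto simp: bounded_clinear_def clinear_blk)
qed

text \<open>The \<open>(2,2)\<close> entry of \<open>T\<^sup>* J T = J\<close> reads \<open>d\<^sup>* d = 1 + b\<^sup>* b\<close>.\<close>

lemma norm_le_blk_d:
  assumes "J_isometric S"
  shows "norm x \<le> norm (blk_d S x)"
proof -
  have "cinner (blk_b S x) (blk_b S x) - cinner (blk_d S x) (blk_d S x) = - cinner x x"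
    using J_isometricD [OF assms, of "(0, x)" "(0, x)"]
    by (simp add: cinner_Jop blk_b_def blk_d_def)
  then have "(norm (blk_b S x))\<^sup>2 - (norm (blk_d S x))\<^sup>2 = - (norm x)\<^sup>2"
    by (simp only: cinner_self_norm of_real_diff [symmetric] of_real_minus [symmetric]
        of_real_eq_iff)
  then have "(norm x)\<^sup>2 \<le> (norm (blk_d S x))\<^sup>2"
    by (smt (verit) zero_le_power2)
  then show ?thesis
    by (rule power2_le_imp_le) simp
qed

lemma cinner_blk_d_inv:
  assumes "bij S" and "J_isometric S"
  shows "cinner (blk_d S x) y = cinner x (blk_d (inv S) y)"
  using J_isometricD [OF assms(2), of "(0, x)" "inv S (0, y)"]
  by (simp add: cinner_Jop blk_b_def blk_d_def surj_f_inv_f [OF bij_is_surj [OF assms(1)]])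

lemma cinner_blk_a_inv:
  assumes "bij S" and "J_isometric S"
  shows "cinner (blk_a S x) y = cinner x (blk_a (inv S) y)"
  using J_isometricD [OF assms(2), of "(x, 0)" "inv S (y, 0)"]
  by (simp add: cinner_Jop blk_a_def blk_c_def surj_f_inv_f [OF bij_is_surj [OF assms(1)]])

text \<open>\<open>d\<close> is bounded below, so its range is closed; the range is also dense, because
  \<open>d\<^sup>*\<close> is the \<open>(2,2)\<close> entry of the \<open>J\<close>-unitary \<open>T\<^sup>-\<^sup>1\<close> and hence injective.\<close>

lemma bij_blk_d:
  assumes "J_unitary S"
  shows "bij (blk_d S)"
proof (rule bijI)
  note S = J_unitaryD [OF assms]
  have below: "norm x \<le> norm (blk_d S x)" for x
    using S(4) by (rule norm_le_blk_d)
  have lin: "clinear (blk_d S)"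
    using S(2) by (rule clinear_blk(4))
  show "inj (blk_d S)"
  proof (rule injI)
    fix x y
    assume "blk_d S x = blk_d S y"
    then show "x = y"
      using below [of "x - y"] by (simp add: clinear_diff [OF lin])
  qed
  show "surj (blk_d S)"
  proof (rule ccontr)
    assume "\<not> surj (blk_d S)"
    moreover have "closed (range (blk_d S))"
      using bounded_clinear_imp_bounded_linear [OF bounded_clinear_blk_d [OF S(1)]] below
      by (rule closed_range_bounded_below)
    ultimately obtain z
      where "z \<noteq> 0" and perp: "\<And>n. n \<in> range (blk_d S) \<Longrightarrow> cinner n z = 0"
      using proper_closed_csubspace_orthogonal [OF csubspace_range [OF lin]] by metis
    have "cinner x (blk_d (inv S) z) = cinner x 0" for x
      using perp [OF rangeI [of _ x]] cinner_blk_d_inv [OF S(3,4), of x z] by simp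
    then have "blk_d (inv S) z = 0"
      by (rule cinner_ext)
    then show False
      using norm_le_blk_d [OF J_unitaryD(4) [OF J_unitary_inv [OF assms]], of z] \<open>z \<noteq> 0\<close>
      by simp
  qed
qed

lemma inj_blk_a_inv:
  assumes "J_unitary S"
  shows "inj (blk_a (inv S))"
proof -
  note S = J_unitaryD [OF assms]
  have "y = 0" if "blk_a (inv S) y = 0" for y
  proof -
    define w where "w = snd (inv S (y, 0))"
    have "inv S (y, 0) = (0, w)"
      using that by (simp add: blk_a_def w_def prod_eq_iff)
    then have "S (0, w) = (y, 0)"
      by (metis S(3) bij_inv_eq_iff)
    then have "blk_d S w = 0" and "blk_b S w = y"
      by (simp_all add: blk_b_def blk_d_def)
    then have "w = 0"
      using norm_le_blk_d [OF S(4), of w] by simp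
    with \<open>blk_b S w = y\<close> show "y = 0"
      by (simp add: clinear_zero [OF clinear_blk(2) [OF S(2)]])
  qed
  moreover have "linear (blk_a (inv S))"
    using J_unitaryD(2) [OF J_unitary_inv [OF assms]] by (intro clinear_imp_linear clinear_blk(1))
  ultimately show ?thesis
    by (simp add: linear_injective_0)
qed

lemma blk_a_inv_Schur_complement:
  assumes "J_unitary S"
  shows "blk_a (inv S) (blk_a S x - blk_b S (inv (blk_d S) (blk_c S x))) = x"
proof -
  note S = J_unitaryD [OF assms]
  define w where "w = inv (blk_d S) (blk_c S x)"
  have "blk_d S w = blk_c S x"
    unfolding w_def using bij_blk_d [OF assms] by (simp add: bij_is_surj surj_f_inv_f)
  then have "S (x, - w) = (blk_a S x - blk_b S w, 0)"
    by (simp add: clinear_blocks [OF S(2)] clinear_minus [OF clinear_blk(2) [OF S(2)]]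
        clinear_minus [OF clinear_blk(4) [OF S(2)]])
  then have "inv S (blk_a S x - blk_b S w, 0) = (x, - w)"
    by (metis S(3) bij_inv_eq_iff)
  then show ?thesis
    by (simp add: blk_a_def w_def)
qed

lemma inv_adj_blk_a:
  assumes "J_unitary S"
  shows "inv (adj (blk_a S)) x = blk_a S x - blk_b S (inv (blk_d S) (blk_c S x))"
proof -
  note S = J_unitaryD [OF assms]
  have "adj (blk_a S) = blk_a (inv S)"
    by (rule adj_eqI) (rule cinner_blk_a_inv [OF S(3,4)])
  then show ?thesis
    using inv_f_eq [OF inj_blk_a_inv [OF assms] blk_a_inv_Schur_complement [OF assms]] by simp
qed

section \<open>The operator \<open>V\<close>\<close>

lemma Vop_exchange:
  assumes "J_unitary S"
  shows "Vop S (x1, snd (S (x1, x2))) = (fst (S (x1, x2)), x2)"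
proof -
  note S = J_unitaryD [OF assms]
  have "clinear (inv (blk_d S))" "inv (blk_d S) (blk_d S x2) = x2"
    using clinear_inv [OF clinear_blk(4) [OF S(2)] bij_blk_d [OF assms]] bij_blk_d [OF assms]
    by (simp_all add: bij_is_inj)
  then have "inv (blk_d S) (blk_c S x1 + blk_d S x2) = inv (blk_d S) (blk_c S x1) + x2"
    by (simp add: clinear_add)
  then show ?thesis
    by (simp add: Vop_def block_op_def clinear_blocks [OF S(2)] inv_adj_blk_a [OF assms]
        clinear_add [OF clinear_blk(2) [OF S(2)]])
qed

lemma J_unitary_snd_surj:
  assumes "J_unitary S"
  obtains x2 where "snd (S (x1, x2)) = y2"
proof
  show "snd (S (x1, inv (blk_d S) (y2 - blk_c S x1))) = y2"
    using bij_blk_d [OF assms]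
    by (simp add: clinear_blocks [OF J_unitaryD(2) [OF assms]] bij_is_surj surj_f_inv_f)
qed

lemma Vop_inv_Vop:
  assumes "J_unitary S"
  shows "Vop (inv S) (Vop S p) = p"
proof -
  obtain x1 y2 where p: "p = (x1, y2)"
    by fastforce
  obtain x2 where y2: "snd (S (x1, x2)) = y2"
    using J_unitary_snd_surj [OF assms] .
  define y1 where "y1 = fst (S (x1, x2))"
  have "inv S (y1, y2) = (x1, x2)"
    using J_unitaryD(3) [OF assms] by (simp add: y1_def bij_is_inj flip: y2)
  moreover have "Vop S p = (y1, x2)"
    using Vop_exchange [OF assms, of x1 x2] by (simp add: p y2 y1_def)
  ultimately show ?thesis
    using Vop_exchange [OF J_unitary_inv [OF assms], of y1 y2] by (simp add: p)
qed

lemma cinner_Vop: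
  assumes "J_unitary S"
  shows "cinner (Vop S p) (Vop S q) = cinner p q"
proof -
  obtain x1 y2 x1' y2' where p: "p = (x1, y2)" and q: "q = (x1', y2')"
    by fastforce
  obtain x2 x2' where y2: "snd (S (x1, x2)) = y2" and y2': "snd (S (x1', x2')) = y2'"
    using J_unitary_snd_surj [OF assms] by metis
  have "cinner (fst (S (x1, x2))) (fst (S (x1', x2'))) - cinner y2 y2'
      = cinner x1 x1' - cinner x2 x2'"
    using J_isometricD [OF J_unitaryD(4) [OF assms], of "(x1, x2)" "(x1', x2')"]
    by (simp add: cinner_Jop y2 y2')
  then show ?thesis
    using Vop_exchange [OF assms, of x1 x2] Vop_exchange [OF assms, of x1' x2']
    by (simp add: p q y2 y2' cinner_prod_def algebra_simps)
qed

lemma Vop_Jop_conj: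
  fixes S :: "('a::chilbert_space \<times> 'a) \<Rightarrow> ('a \<times> 'a)"
  assumes S: "clinear S" and "bij (blk_d S)"
  shows "Jop \<circ> Vop (Jop \<circ> S \<circ> Jop) \<circ> Jop = Vop S"
proof -
  have S_minus: "S (0, - y) = - S (0, y)" for y :: 'a
    using clinear_minus [OF S, of "(0, y)"] by simp
  have blocks: "blk_a (Jop \<circ> S \<circ> Jop) = blk_a S" "blk_b (Jop \<circ> S \<circ> Jop) = (\<lambda>y. - blk_b S y)"
    "blk_c (Jop \<circ> S \<circ> Jop) = (\<lambda>x. - blk_c S x)" "blk_d (Jop \<circ> S \<circ> Jop) = blk_d S"
    by (simp_all add: fun_eq_iff blk_a_def blk_b_def blk_c_def blk_d_def Jop_def S_minus)
  show ?thesis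
    unfolding Vop_def block_op_def blocks
    using clinear_inv [OF clinear_blk(4) [OF S] \<open>bij (blk_d S)\<close>]
    by (simp add: fun_eq_iff Jop_def clinear_minus clinear_minus [OF clinear_blk(2) [OF S]])
qed

lemma Vop_Vop_inv:
  assumes "J_unitary T"
  shows "Vop T (Vop (inv T) p) = p"
  using Vop_inv_Vop [OF J_unitary_inv [OF assms]] J_unitaryD(3) [OF assms] by (simp add: inv_inv_eq)

lemma bij_Vop: "J_unitary T \<Longrightarrow> bij (Vop T)"
  by (rule o_bij [where g = "Vop (inv T)"]) (simp_all add: fun_eq_iff Vop_inv_Vop Vop_Vop_inv)

lemma inv_Vop: "J_unitary T \<Longrightarrow> inv (Vop T) = Vop (inv T)"
  by (rule inv_equality) (simp_all add: Vop_inv_Vop Vop_Vop_inv)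

lemma adj_Vop:
  assumes "J_unitary T"
  shows "adj (Vop T) = Vop (inv T)"
proof (rule adj_eqI)
  fix x y
  have "cinner (Vop T x) y = cinner (Vop T x) (Vop T (Vop (inv T) y))"
    by (simp add: Vop_Vop_inv [OF assms])
  also have "\<dots> = cinner x (Vop (inv T) y)"
    by (rule cinner_Vop [OF assms])
  finally show "cinner (Vop T x) y = cinner x (Vop (inv T) y)" .
qed

lemma Vop_inv_eq_Jop_conj_adj:
  assumes "J_unitary T"
  shows "Vop (inv T) = Jop \<circ> Vop (adj T) \<circ> Jop"
proof -
  have "J_unitary (inv T)"
    using assms by (rule J_unitary_inv)
  from Vop_Jop_conj [OF J_unitaryD(2) [OF this] bij_blk_d [OF this]] show ?thesis
    by (simp add: adj_J_unitary [OF assms])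
qed

theorem proposition3p18:
  fixes T :: "('a::chilbert_space \<times> 'a) \<Rightarrow> ('a \<times> 'a)"
  assumes separable: "\<exists>D :: 'a set. countable D \<and> closure D = UNIV"
    and JU: "J_unitary T"
  shows "bij (Vop T) \<and> inv (Vop T) = adj (Vop T) \<and> adj (Vop T) = Vop (inv T)
         \<and> Vop (inv T) = Jop \<circ> Vop (adj T) \<circ> Jop"
  using bij_Vop [OF JU] inv_Vop [OF JU] adj_Vop [OF JU] Vop_inv_eq_Jop_conj_adj [OF JU] by simp

end
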